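(* Let $k \geq 1$ and $m \geq 0$ be integers and put $n = 2k+m$. The number of Riordan paths of length $n$ having exactly $m$ flat steps and exactly $k$ up steps (and hence exactly $k$ down steps) equals $f^{(k,k,1^m)}$, the number of standard Young tableaux of shape $(k,k,1^m)$.
   Context: A Motzkin path of length $n$ is a lattice path from $(0,0)$ to $(n,0)$ using steps $U=(1,1)$, $F=(1,0)$ (flat), $D=(1,-1)$ that never goes below the $x$-axis. A Riordan path is a Motzkin path with no flat step $F$ on the $x$-axis (i.e. every $F$ is preceded by strictly more $U$'s than $D$'s). For a partition $\mu$, $f^\mu$ denotes the number of standard Young tableaux of shape $\mu$; $(k,k,1^m)$ is the partition with two parts equal to $k$ followed by $m$ parts equal to $1$. *)

theory Defs
  imports Main
begin

datatype step = U | F | D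

fun step_val :: "step \<Rightarrow> int" where
  "step_val U = 1" | "step_val F = 0" | "step_val D = -1"

definition height :: "step list \<Rightarrow> nat \<Rightarrow> int" where
  "height w i = (\<Sum>s\<leftarrow>take i w. step_val s)"

definition motzkin_path :: "step list \<Rightarrow> bool" where
  "motzkin_path w \<longleftrightarrow> (\<forall>i\<le>length w. height w i \<ge> 0) \<and> height w (length w) = 0"

definition riordan_path :: "step list \<Rightarrow> bool" where
  "riordan_path w \<longleftrightarrow> motzkin_path w \<and> (\<forall>i<length w. w ! i = F \<longrightarrow> height w i > 0)"

definition riordan_paths :: "nat \<Rightarrow> nat \<Rightarrow> nat \<Rightarrow> step list set" where
  "riordan_paths n m k = {w. length w = n \<and> riordan_path w \<and>
      length (filter (\<lambda>s. s = F) w) = m \<and> length (filter (\<lambda>s. s = U) w) = k}"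

text \<open>Partitions are given as lists of row lengths (weakly decreasing, positive).
  Cells of the Young diagram: (row, column), 0-indexed.\<close>
definition cells :: "nat list \<Rightarrow> (nat \<times> nat) set" where
  "cells \<mu> = {(i, j). i < length \<mu> \<and> j < \<mu> ! i}"

definition syt :: "nat list \<Rightarrow> ((nat \<times> nat) \<Rightarrow> nat) set" where
  "syt \<mu> = {T. bij_betw T (cells \<mu>) {1..sum_list \<mu>} \<and>
      (\<forall>c. c \<notin> cells \<mu> \<longrightarrow> T c = 0) \<and>
      (\<forall>i j. (i, j + 1) \<in> cells \<mu> \<longrightarrow> T (i, j) < T (i, j + 1)) \<and>
      (\<forall>i j. (i + 1, j) \<in> cells \<mu> \<longrightarrow> T (i, j) < T (i + 1, j))}"

definition num_syt :: "nat list \<Rightarrow> nat" ("f\<^bsup>_\<^esup>") where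
  "num_syt \<mu> = card (syt \<mu>)"

end

theory Submission
  imports Defs
begin

text \<open>
  Riordan paths and standard Young tableaux of shape \<open>(k, k, 1^m)\<close> are both put in
  bijection with the Motzkin paths with \<open>k\<close> up steps and \<open>m\<close> flat steps in which every
  flat step comes after some down step.

  Reading a tableau through its entries
  \<open>1, ..., 2k + m\<close> and writing U, D or F according as the entry lies in the first row, the
  second row or the first column below the second row gives a bijection onto these paths:
  increasing rows and columns become the ballot condition (the \<open>j\<close>-th U precedes the
  \<open>j\<close>-th D) and the condition that the first D precedes the first F.

  Such a path has the form \<open>U^(r+1) D x\<close>, where \<open>x\<close> goes from height \<open>r\<close> to height 0
  without going below 0. It is sent to the Riordan path \<open>U x' D\<close>, where \<open>x'\<close> arises from
  \<open>x\<close> by inserting an up step after each down step that reaches a new minimum of \<open>x\<close>.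
  There are exactly \<open>r\<close> such down steps, so the numbers of steps of each kind are preserved,
  and deleting the inserted up steps inverts the map.
\<close>

section \<open>Positions of an element in a list\<close>

definition positions :: "'a list \<Rightarrow> 'a \<Rightarrow> nat list" where
  "positions xs a = filter (\<lambda>i. xs ! i = a) [0..<length xs]"

lemma sorted_wrt_positions: "sorted_wrt (<) (positions xs a)"
  unfolding positions_def by (rule sorted_wrt_filter) simp

lemma set_positions: "set (positions xs a) = {i. i < length xs \<and> xs ! i = a}"
  unfolding positions_def by auto

lemma positions_eqI:
  assumes "sorted_wrt (<) ps" and "set ps = {i. i < length xs \<and> xs ! i = a}"
  shows "positions xs a = ps"
  using assms sorted_wrt_positions[of xs a] set_positions[of xs a]
  by (metis sorted_distinct_set_unique strict_sorted_iff)

lemma positions_snoc: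
  "positions (xs @ [x]) a = positions xs a @ (if x = a then [length xs] else [])"
  unfolding positions_def by (auto simp: nth_append intro: filter_cong)

lemma length_positions: "length (positions xs a) = count_list xs a"
  by (induction xs rule: rev_induct) (simp_all add: positions_snoc, simp add: positions_def)

lemma positions_nth:
  assumes "j < count_list xs a"
  shows "positions xs a ! j < length xs" "xs ! (positions xs a ! j) = a"
  using nth_mem[of j "positions xs a"] assms by (auto simp: length_positions set_positions)

lemma positions_nth_strict_mono:
  "j < j' \<Longrightarrow> j' < count_list xs a \<Longrightarrow> positions xs a ! j < positions xs a ! j'"
  using sorted_wrt_positions[of xs a] by (simp add: sorted_wrt_iff_nth_less length_positions)

lemma positions_nth_inject:
  "j < count_list xs a \<Longrightarrow> j' < count_list xs a \<Longrightarrow>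
    positions xs a ! j = positions xs a ! j' \<longleftrightarrow> j = j'"
  by (metis positions_nth_strict_mono linorder_neqE_nat less_irrefl)

lemma positions_take: "positions (take i xs) a = filter (\<lambda>p. p < i) (positions xs a)"
  by (rule positions_eqI) (auto simp: sorted_wrt_filter sorted_wrt_positions set_positions)

lemma positions_nth_less_iff:
  assumes j: "j < count_list xs a"
  shows "positions xs a ! j < i \<longleftrightarrow> j < count_list (take i xs) a"
proof -
  let ?ps = "positions xs a"
  let ?S = "{l. l < length ?ps \<and> ?ps ! l < i}"
  have count: "count_list (take i xs) a = card ?S"
    by (simp flip: length_positions add: positions_take length_filter_conv_card)
  show ?thesis
  proof
    assume "?ps ! j < i"
    moreover have "?ps ! l \<le> ?ps ! j" if "l \<le> j" for l
      using that j positions_nth_strict_mono[of l j xs a] by (cases "l = j") auto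
    ultimately have "{..j} \<subseteq> ?S"
      using j by (auto simp: length_positions intro: le_less_trans)
    then have "card {..j} \<le> card ?S" by (intro card_mono) simp_all
    then show "j < count_list (take i xs) a" unfolding count by simp
  next
    assume "j < count_list (take i xs) a"
    show "?ps ! j < i"
    proof (rule ccontr)
      assume "\<not> ?ps ! j < i"
      have "l < j" if l: "l \<in> ?S" for l
      proof (rule ccontr)
        assume "\<not> l < j"
        then have "?ps ! j \<le> ?ps ! l"
          using l positions_nth_strict_mono[of j l xs a]
          by (cases "l = j") (auto simp: length_positions)
        then show False using l \<open>\<not> ?ps ! j < i\<close> by simp
      qed
      then have "?S \<subseteq> {..<j}" by blast
      then have "card ?S \<le> card {..<j}" by (intro card_mono) simp_all
      then show False using \<open>j < count_list (take i xs) a\<close> count by simp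
    qed
  qed
qed

lemma count_list_take_le: "count_list (take i xs) a \<le> count_list xs a"
  by (metis append_take_drop_id count_list_append le_add1)

lemma prefix_count_le_iff_positions_less:
  assumes "a \<noteq> b" and "count_list xs b \<le> count_list xs a"
  shows "(\<forall>i. count_list (take i xs) b \<le> count_list (take i xs) a) \<longleftrightarrow>
    (\<forall>j<count_list xs b. positions xs a ! j < positions xs b ! j)"
proof
  assume prefix: "\<forall>i. count_list (take i xs) b \<le> count_list (take i xs) a"
  show "\<forall>j<count_list xs b. positions xs a ! j < positions xs b ! j"
  proof (intro allI impI)
    fix j assume j: "j < count_list xs b"
    let ?p = "positions xs b ! j"
    have "j < count_list (take (Suc ?p) xs) b" by (simp add: positions_nth_less_iff[OF j, symmetric])
    then have "j < count_list (take (Suc ?p) xs) a" using spec[OF prefix, of "Suc ?p"] by linarith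
    then have "positions xs a ! j < Suc ?p"
      using positions_nth_less_iff[of j xs a] j assms(2) by simp
    moreover have "positions xs a ! j \<noteq> ?p"
      using positions_nth(2)[of j xs a] positions_nth(2)[OF j] j assms by auto
    ultimately show "positions xs a ! j < ?p" by simp
  qed
next
  assume ballot: "\<forall>j<count_list xs b. positions xs a ! j < positions xs b ! j"
  show "\<forall>i. count_list (take i xs) b \<le> count_list (take i xs) a"
  proof
    fix i
    show "count_list (take i xs) b \<le> count_list (take i xs) a"
    proof (cases "count_list (take i xs) b")
      case (Suc j)
      then have j: "j < count_list xs b" using count_list_take_le[of i xs b] by simp
      then have "positions xs b ! j < i" using positions_nth_less_iff[OF j] Suc by simp
      moreover have "positions xs a ! j < positions xs b ! j" using ballot j by blast
      ultimately have "positions xs a ! j < i" by linarith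
      then show ?thesis
        using positions_nth_less_iff[of j xs a] j assms(2) Suc by simp
    qed simp
  qed
qed

lemma count_list_replicate: "count_list (replicate r x) y = (if x = y then r else 0)"
  by (induction r) auto

lemma length_filter_eq_count_list: "length (filter (\<lambda>y. y = x) xs) = count_list xs x"
  by (induction xs) auto

section \<open>Heights, Motzkin paths and Riordan paths\<close>

lemma length_eq_count_list_steps: "length w = count_list w U + count_list w D + count_list w F"
proof (induction w)
  case (Cons s w) then show ?case by (cases s) auto
qed simp

lemma height_0 [simp]: "height w 0 = 0"
  by (simp add: height_def)

lemma height_Cons_Suc [simp]: "height (s # w) (Suc i) = step_val s + height w i"
  by (simp add: height_def)

lemma height_eq_count_list:
  "height w i = int (count_list (take i w) U) - int (count_list (take i w) D)"
proof (induction w arbitrary: i)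
  case (Cons s w) then show ?case by (cases i; cases s) auto
qed (simp add: height_def)

lemma motzkin_path_iff_positions:
  "motzkin_path v \<longleftrightarrow> count_list v U = count_list v D \<and>
    (\<forall>j<count_list v D. positions v U ! j < positions v D ! j)"
proof -
  have "height v i = height v (length v)" if "length v \<le> i" for i
    using that by (simp add: height_def)
  then have "(\<forall>i\<le>length v. 0 \<le> height v i) \<longleftrightarrow> (\<forall>i. 0 \<le> height v i)"
    by (metis nat_le_linear)
  also have "\<dots> \<longleftrightarrow> (\<forall>i. count_list (take i v) D \<le> count_list (take i v) U)"
    by (simp add: height_eq_count_list)
  finally have prefix: "(\<forall>i\<le>length v. 0 \<le> height v i) \<longleftrightarrow>
      (\<forall>i. count_list (take i v) D \<le> count_list (take i v) U)" .
  have "height v (length v) = 0 \<longleftrightarrow> count_list v U = count_list v D"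
    by (simp add: height_eq_count_list)
  then show ?thesis
    unfolding motzkin_path_def prefix
    using prefix_count_le_iff_positions_less[of U D v] by auto
qed

fun motzkin_from :: "nat \<Rightarrow> step list \<Rightarrow> bool" where
  "motzkin_from h [] \<longleftrightarrow> h = 0"
| "motzkin_from h (U # w) \<longleftrightarrow> motzkin_from (Suc h) w"
| "motzkin_from h (F # w) \<longleftrightarrow> motzkin_from h w"
| "motzkin_from h (D # w) \<longleftrightarrow> 0 < h \<and> motzkin_from (h - 1) w"

fun riordan_from :: "nat \<Rightarrow> step list \<Rightarrow> bool" where
  "riordan_from h [] \<longleftrightarrow> h = 0"
| "riordan_from h (U # w) \<longleftrightarrow> riordan_from (Suc h) w"
| "riordan_from h (F # w) \<longleftrightarrow> 0 < h \<and> riordan_from h w"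
| "riordan_from h (D # w) \<longleftrightarrow> 0 < h \<and> riordan_from (h - 1) w"

lemma All_le_Suc2: "(\<forall>i\<le>Suc n. P i) \<longleftrightarrow> P 0 \<and> (\<forall>i\<le>n. P (Suc i))"
  using All_less_Suc2[of "Suc n" P] by (simp add: less_Suc_eq_le)

lemma motzkin_from_iff_height:
  "motzkin_from h w \<longleftrightarrow>
    (\<forall>i\<le>length w. 0 \<le> int h + height w i) \<and> int h + height w (length w) = 0"
proof (induction w arbitrary: h)
  case (Cons s w)
  show ?case
  proof (cases s)
    case D
    then show ?thesis using Cons.IH[of "h - 1"]
      by (cases h) (simp_all only: length_Cons All_le_Suc2, auto dest: spec[of _ 0] simp: algebra_simps)
  qed (use Cons.IH in \<open>simp_all only: length_Cons All_le_Suc2, auto simp: algebra_simps\<close>)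
qed simp

lemma riordan_from_iff_height:
  "riordan_from h w \<longleftrightarrow> motzkin_from h w \<and> (\<forall>i<length w. w ! i = F \<longrightarrow> 0 < int h + height w i)"
proof (induction w arbitrary: h)
  case (Cons s w)
  show ?case
  proof (cases s)
    case D
    then show ?thesis using Cons.IH[of "h - 1"]
      by (cases h) (simp_all only: length_Cons All_less_Suc2, auto simp: algebra_simps)
  qed (use Cons.IH in \<open>simp_all only: length_Cons All_less_Suc2, auto simp: algebra_simps\<close>)
qed simp

lemma motzkin_path_iff_motzkin_from: "motzkin_path w \<longleftrightarrow> motzkin_from 0 w"
  by (simp add: motzkin_from_iff_height motzkin_path_def)

lemma riordan_path_iff_riordan_from: "riordan_path w \<longleftrightarrow> riordan_from 0 w"
  by (simp add: riordan_path_def riordan_from_iff_height motzkin_from_iff_height motzkin_path_def)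

lemma motzkin_from_replicate_U: "motzkin_from h (replicate r U @ w) \<longleftrightarrow> motzkin_from (h + r) w"
  by (induction r arbitrary: h) auto

lemma motzkin_from_count_list: "motzkin_from h w \<Longrightarrow> h + count_list w U = count_list w D"
  by (induction h w rule: motzkin_from.induct) auto

lemma riordan_from_append: "riordan_from h (v @ w) \<Longrightarrow> \<exists>h'. riordan_from h' w"
  by (induction v arbitrary: h) (auto elim: riordan_from.elims)

lemma riordan_from_0_shape:
  assumes "riordan_from 0 w" and "w \<noteq> []"
  obtains y where "w = U # y @ [D]"
proof -
  obtain s w' where w: "w = s # w'" using assms(2) by (cases w) auto
  with assms(1) have "s = U" by (cases s) auto
  with assms(1) w have "riordan_from 1 w'" by simp
  then obtain y s' where w': "w' = y @ [s']" by (metis riordan_from.simps(1) rev_exhaust zero_neq_one)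
  then obtain h where "riordan_from h [s']" using riordan_from_append \<open>riordan_from 1 w'\<close> by blast
  then have "s' = D" by (cases s') auto
  then show ?thesis using that w w' \<open>s = U\<close> by simp
qed

section \<open>Motzkin paths in which every flat step follows a down step\<close>

definition flat_after_down :: "step list \<Rightarrow> bool" where
  "flat_after_down v \<longleftrightarrow> (\<forall>i<length v. v ! i = F \<longrightarrow> D \<in> set (take i v))"

definition flat_after_down_paths :: "nat \<Rightarrow> nat \<Rightarrow> nat \<Rightarrow> step list set" where
  "flat_after_down_paths n m k = {v. length v = n \<and> motzkin_path v \<and> flat_after_down v \<and>
     count_list v F = m \<and> count_list v U = k}"

lemma flat_after_down_iff_positions:
  "flat_after_down v \<longleftrightarrow>
    (0 < count_list v F \<longrightarrow> 0 < count_list v D \<and> positions v D ! 0 < positions v F ! 0)"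
proof
  assume fad: "flat_after_down v"
  show "0 < count_list v F \<longrightarrow> 0 < count_list v D \<and> positions v D ! 0 < positions v F ! 0"
  proof
    assume F: "0 < count_list v F"
    let ?p = "positions v F ! 0"
    have "D \<in> set (take ?p v)"
      using fad positions_nth[OF F] by (simp add: flat_after_down_def)
    then have "0 < count_list (take ?p v) D" using count_list_0_iff[of "take ?p v" D] by auto
    moreover from this have D: "0 < count_list v D" using count_list_take_le[of ?p v D] by linarith
    ultimately show "0 < count_list v D \<and> positions v D ! 0 < ?p"
      using positions_nth_less_iff[OF D] by simp
  qed
next
  assume first: "0 < count_list v F \<longrightarrow> 0 < count_list v D \<and> positions v D ! 0 < positions v F ! 0"
  show "flat_after_down v"
    unfolding flat_after_down_def
  proof (intro allI impI)
    fix i assume "i < length v" "v ! i = F"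
    then have "i \<in> set (positions v F)" by (simp add: set_positions)
    then obtain j where j: "j < count_list v F" "i = positions v F ! j"
      by (auto simp: in_set_conv_nth length_positions)
    then have "positions v F ! 0 \<le> i"
      using positions_nth_strict_mono[of 0 j v F] by (cases j) auto
    with j first have D: "0 < count_list v D" and "positions v D ! 0 < i" by auto
    then have "0 < count_list (take i v) D" using positions_nth_less_iff[OF D] by simp
    then show "D \<in> set (take i v)" using count_list_0_iff[of "take i v" D] by auto
  qed
qed

lemma takeWhile_U_eq_replicate:
  "takeWhile (\<lambda>s. s = U) v = replicate (length (takeWhile (\<lambda>s. s = U) v)) U"
  by (metis (mono_tags) replicate_length_same set_takeWhileD)

lemma motzkin_flat_after_down_iff:
  "motzkin_from 0 v \<and> flat_after_down v \<and> U \<in> set v \<longleftrightarrow>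
    (\<exists>r x. v = replicate (Suc r) U @ D # x \<and> motzkin_from r x)"
proof
  assume v: "motzkin_from 0 v \<and> flat_after_down v \<and> U \<in> set v"
  obtain r rest where v_eq: "v = replicate r U @ rest" and rest: "rest \<noteq> [] \<Longrightarrow> hd rest \<noteq> U"
  proof -
    have "v = replicate (length (takeWhile (\<lambda>s. s = U) v)) U @ dropWhile (\<lambda>s. s = U) v"
      by (subst takeWhile_U_eq_replicate[symmetric]) simp
    then show ?thesis using that hd_dropWhile by blast
  qed
  have "D \<in> set v"
    using v motzkin_from_count_list[of 0 v] count_list_0_iff[of v U] count_list_0_iff[of v D] by simp
  then obtain s x where "rest = s # x" using v_eq by (cases rest) auto
  then have v_eq: "v = replicate r U @ s # x" and "s \<noteq> U" using v_eq rest by auto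
  have "s \<noteq> F"
  proof
    assume "s = F"
    then have "v ! r = F" "r < length v" unfolding v_eq by (simp_all add: nth_append)
    then have "D \<in> set (take r v)" using v by (simp add: flat_after_down_def)
    then show False unfolding v_eq by simp
  qed
  then have "s = D" using \<open>s \<noteq> U\<close> by (cases s) auto
  moreover have "r \<noteq> 0" using v \<open>s = D\<close> unfolding v_eq by (cases r) auto
  ultimately show "\<exists>r x. v = replicate (Suc r) U @ D # x \<and> motzkin_from r x"
    using v unfolding v_eq by (intro exI[of _ "r - 1"] exI[of _ x]) (auto simp: motzkin_from_replicate_U)
next
  assume "\<exists>r x. v = replicate (Suc r) U @ D # x \<and> motzkin_from r x"
  then obtain r x where v: "v = replicate (Suc r) U @ D # x" and x: "motzkin_from r x" by blast
  have "D \<in> set (take i v)" if "v ! i = F" for i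
  proof -
    have "Suc r < i"
      using that v by (cases "i < Suc r"; cases "i = Suc r") (auto simp: nth_append simp del: replicate_Suc)
    then obtain d where "i = Suc (Suc r + d)" using less_imp_Suc_add by blast
    then show ?thesis using v by (simp add: take_append del: replicate_Suc)
  qed
  then show "motzkin_from 0 v \<and> flat_after_down v \<and> U \<in> set v"
    using v x by (auto simp: flat_after_down_def motzkin_from_replicate_U)
qed

section \<open>The bijection onto Riordan paths\<close>

text \<open>The counter \<open>e\<close> is the height above the lowest level reached so far.\<close>
fun insert_ups :: "nat \<Rightarrow> step list \<Rightarrow> step list" where
  "insert_ups e [] = []"
| "insert_ups e (U # x) = U # insert_ups (Suc e) x"
| "insert_ups e (F # x) = F # insert_ups e x"
| "insert_ups 0 (D # x) = D # U # insert_ups 0 x"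
| "insert_ups (Suc e) (D # x) = D # insert_ups e x"

fun remove_ups :: "nat \<Rightarrow> step list \<Rightarrow> step list" where
  "remove_ups e [] = []"
| "remove_ups e (U # y) = U # remove_ups (Suc e) y"
| "remove_ups e (F # y) = F # remove_ups e y"
| "remove_ups (Suc e) (D # y) = D # remove_ups e y"
| "remove_ups 0 (D # U # y) = D # remove_ups 0 y"
| "remove_ups 0 (D # y) = D # remove_ups 0 y"

lemma remove_ups_insert_ups: "remove_ups e (insert_ups e x) = x"
  by (induction e x rule: insert_ups.induct) auto

lemma insert_ups_remove_ups: "riordan_from (Suc e) (y @ [D]) \<Longrightarrow> insert_ups e (remove_ups e y) = y"
  by (induction e y rule: remove_ups.induct) auto

lemma riordan_from_insert_ups: "motzkin_from (L + e) x \<Longrightarrow> riordan_from (Suc e) (insert_ups e x @ [D])"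
proof (induction e x arbitrary: L rule: insert_ups.induct)
  case (2 e x)
  then show ?case using "2.IH"[of L] by simp
next
  case (4 x)
  then show ?case using "4.IH"[of "L - 1"] by auto
qed auto

lemma motzkin_from_remove_ups: "riordan_from (Suc e) (y @ [D]) \<Longrightarrow> \<exists>L. motzkin_from (L + e) (remove_ups e y)"
proof (induction e y rule: remove_ups.induct)
  case (2 e y)
  then obtain L where "motzkin_from (L + Suc e) (remove_ups (Suc e) y)" by auto
  then show ?case by (intro exI[of _ L]) auto
next
  case (4 e y)
  then obtain L where "motzkin_from (L + e) (remove_ups e y)" by auto
  then show ?case by (intro exI[of _ L]) auto
next
  case (5 y)
  then obtain L where "motzkin_from L (remove_ups 0 y)" by auto
  then show ?case by (intro exI[of _ "Suc L"]) auto
qed auto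

lemma count_list_insert_ups:
  "count_list (insert_ups e x) D = count_list x D"
  "count_list (insert_ups e x) F = count_list x F"
  by (induction e x rule: insert_ups.induct) auto

lemma count_list_insert_ups_U:
  "motzkin_from (L + e) x \<Longrightarrow> count_list (insert_ups e x) U = count_list x U + L"
proof (induction e x arbitrary: L rule: insert_ups.induct)
  case (2 e x)
  then show ?case using "2.IH"[of L] by simp
next
  case (4 x)
  then show ?case using "4.IH"[of "L - 1"] by auto
qed auto

definition riordan_transform :: "step list \<Rightarrow> step list" where
  "riordan_transform v = U # insert_ups 0 (tl (dropWhile (\<lambda>s. s = U) v)) @ [D]"

lemma riordan_transform_replicate:
  "riordan_transform (replicate r U @ D # x) = U # insert_ups 0 x @ [D]"
proof -
  have "dropWhile (\<lambda>s. s = U) (replicate r U @ D # x) = D # x" by (induction r) auto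
  then show ?thesis by (simp add: riordan_transform_def)
qed

lemma riordan_transform_replicate_props:
  assumes "motzkin_from r x"
  shows riordan_from_riordan_transform:
      "riordan_from 0 (riordan_transform (replicate (Suc r) U @ D # x))"
    and count_list_riordan_transform:
      "count_list (riordan_transform (replicate (Suc r) U @ D # x)) s =
        count_list (replicate (Suc r) U @ D # x) s"
    and length_riordan_transform:
      "length (riordan_transform (replicate (Suc r) U @ D # x)) = length (replicate (Suc r) U @ D # x)"
proof -
  note w = riordan_transform_replicate[of "Suc r" x]
  show "riordan_from 0 (riordan_transform (replicate (Suc r) U @ D # x))"
    using riordan_from_insert_ups[of r 0 x] assms by (simp only: w) simp
  show counts: "count_list (riordan_transform (replicate (Suc r) U @ D # x)) s =
      count_list (replicate (Suc r) U @ D # x) s" for s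
    using count_list_insert_ups[of 0 x] count_list_insert_ups_U[of r 0 x] assms
    unfolding w by (cases s) (simp_all add: count_list_replicate)
  show "length (riordan_transform (replicate (Suc r) U @ D # x)) = length (replicate (Suc r) U @ D # x)"
    by (simp only: length_eq_count_list_steps counts)
qed

lemma riordan_paths_eq:
  "riordan_paths n m k =
    {w. length w = n \<and> riordan_from 0 w \<and> count_list w F = m \<and> count_list w U = k}"
  by (simp add: riordan_paths_def riordan_path_iff_riordan_from length_filter_eq_count_list)

lemma flat_after_down_paths_cases:
  assumes "1 \<le> k" and "v \<in> flat_after_down_paths n m k"
  obtains r x where "v = replicate (Suc r) U @ D # x" and "motzkin_from r x"
  using assms motzkin_flat_after_down_iff[of v] count_list_0_iff[of v U]
  by (auto simp: flat_after_down_paths_def motzkin_path_iff_motzkin_from)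

lemma inj_on_riordan_transform:
  assumes "1 \<le> k"
  shows "inj_on riordan_transform (flat_after_down_paths n m k)"
proof (rule inj_onI)
  fix v1 v2
  assume v1: "v1 \<in> flat_after_down_paths n m k" and v2: "v2 \<in> flat_after_down_paths n m k"
    and eq: "riordan_transform v1 = riordan_transform v2"
  obtain r1 x1 where 1: "v1 = replicate (Suc r1) U @ D # x1"
    using flat_after_down_paths_cases[OF assms v1] by blast
  obtain r2 x2 where 2: "v2 = replicate (Suc r2) U @ D # x2"
    using flat_after_down_paths_cases[OF assms v2] by blast
  have "insert_ups 0 x1 = insert_ups 0 x2"
    using eq by (simp add: 1 2 riordan_transform_replicate del: replicate_Suc)
  then have "x1 = x2" by (metis remove_ups_insert_ups)
  moreover have "count_list v1 U = count_list v2 U"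
    using v1 v2 by (simp add: flat_after_down_paths_def)
  ultimately show "v1 = v2" by (simp add: 1 2 count_list_replicate)
qed

lemma riordan_transform_image_subset:
  assumes "1 \<le> k"
  shows "riordan_transform ` flat_after_down_paths n m k \<subseteq> riordan_paths n m k"
proof
  fix w assume "w \<in> riordan_transform ` flat_after_down_paths n m k"
  then obtain v where v: "v \<in> flat_after_down_paths n m k" and w: "w = riordan_transform v" by blast
  obtain r x where "v = replicate (Suc r) U @ D # x" and "motzkin_from r x"
    using flat_after_down_paths_cases[OF assms v] by blast
  then show "w \<in> riordan_paths n m k"
    using v riordan_transform_replicate_props[of r x]
    by (simp add: w riordan_paths_eq flat_after_down_paths_def)
qed

lemma riordan_paths_subset_riordan_transform_image:
  assumes "1 \<le> k"
  shows "riordan_paths n m k \<subseteq> riordan_transform ` flat_after_down_paths n m k"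
proof
  fix w assume w: "w \<in> riordan_paths n m k"
  then have "w \<noteq> []" using assms by (auto simp: riordan_paths_eq)
  then obtain y where y: "w = U # y @ [D]"
    using w riordan_from_0_shape by (auto simp: riordan_paths_eq)
  then have ry: "riordan_from (Suc 0) (y @ [D])" using w by (simp add: riordan_paths_eq)
  obtain r where r: "motzkin_from r (remove_ups 0 y)" using motzkin_from_remove_ups[OF ry] by auto
  define v where "v = replicate (Suc r) U @ D # remove_ups 0 y"
  have v_w: "riordan_transform v = w"
    using insert_ups_remove_ups[OF ry]
    by (simp add: v_def riordan_transform_replicate y del: replicate_Suc)
  have "motzkin_from 0 v \<and> flat_after_down v \<and> U \<in> set v"
    using motzkin_flat_after_down_iff r v_def by blast
  moreover have "length v = length w" "count_list v s = count_list w s" for s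
    using riordan_transform_replicate_props[OF r] by (simp_all add: v_w[symmetric] v_def)
  ultimately have "v \<in> flat_after_down_paths n m k"
    using w by (simp add: flat_after_down_paths_def riordan_paths_eq motzkin_path_iff_motzkin_from)
  then show "w \<in> riordan_transform ` flat_after_down_paths n m k" using v_w by blast
qed

lemma bij_betw_riordan_transform:
  assumes "1 \<le> k"
  shows "bij_betw riordan_transform (flat_after_down_paths n m k) (riordan_paths n m k)"
  using inj_on_riordan_transform riordan_transform_image_subset
    riordan_paths_subset_riordan_transform_image assms
  by (intro bij_betw_imageI) blast+

section \<open>Standard Young tableaux of shape (k, k, 1^m)\<close>

definition shape_kk1m :: "nat \<Rightarrow> nat \<Rightarrow> nat list" where
  "shape_kk1m k m = [k, k] @ replicate m 1"

text \<open>The entry of \<open>cell s j\<close> is one more than the position of the \<open>(j+1)\<close>-st step \<open>s\<close>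
  of the corresponding path.\<close>

fun cell :: "step \<Rightarrow> nat \<Rightarrow> nat \<times> nat" where
  "cell U j = (0, j)"
| "cell D j = (1, j)"
| "cell F j = (j + 2, 0)"

fun cell_step :: "nat \<times> nat \<Rightarrow> step" where
  "cell_step (0, j) = U"
| "cell_step (Suc 0, j) = D"
| "cell_step (Suc (Suc i), j) = F"

fun cell_index :: "nat \<times> nat \<Rightarrow> nat" where
  "cell_index (0, j) = j"
| "cell_index (Suc 0, j) = j"
| "cell_index (Suc (Suc i), j) = i"

definition shape_count :: "nat \<Rightarrow> nat \<Rightarrow> step \<Rightarrow> nat" where
  "shape_count k m s = (if s = F then m else k)"

lemma cell_step_cell [simp]: "cell_step (cell s j) = s"
  by (cases s) (simp_all add: numeral_2_eq_2)

lemma cell_index_cell [simp]: "cell_index (cell s j) = j"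
  by (cases s) (simp_all add: numeral_2_eq_2)

lemma mem_cells_shape_kk1m:
  "(i, j) \<in> cells (shape_kk1m k m) \<longleftrightarrow>
    (i = 0 \<and> j < k) \<or> (i = 1 \<and> j < k) \<or> (2 \<le> i \<and> i < m + 2 \<and> j = 0)"
proof -
  have "shape_kk1m k m ! i = 1" if "2 \<le> i" "i < m + 2"
    using that by (simp add: shape_kk1m_def nth_append)
  then show ?thesis
    unfolding cells_def by (cases "i = 0"; cases "i = 1") (auto simp: shape_kk1m_def)
qed

lemma cell_mem_cells_iff: "cell s j \<in> cells (shape_kk1m k m) \<longleftrightarrow> j < shape_count k m s"
  by (cases s) (auto simp: mem_cells_shape_kk1m shape_count_def)

lemma cell_cell_step_index:
  "c \<in> cells (shape_kk1m k m) \<Longrightarrow> cell (cell_step c) (cell_index c) = c"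
  by (cases c rule: cell_step.cases) (auto simp: mem_cells_shape_kk1m)

lemma cell_index_less:
  "c \<in> cells (shape_kk1m k m) \<Longrightarrow> cell_index c < shape_count k m (cell_step c)"
  using cell_mem_cells_iff cell_cell_step_index by metis

lemma mem_cells_shape_kk1m_right:
  "(i, Suc j) \<in> cells (shape_kk1m k m) \<longleftrightarrow> (i = 0 \<or> i = 1) \<and> Suc j < k"
  by (auto simp: mem_cells_shape_kk1m)

lemma mem_cells_shape_kk1m_below:
  "(Suc i, j) \<in> cells (shape_kk1m k m) \<longleftrightarrow>
    (i = 0 \<and> j < k) \<or> (i = 1 \<and> 0 < m \<and> j = 0) \<or> (\<exists>i'. i = Suc (Suc i') \<and> Suc i' < m \<and> j = 0)"
  by (cases "i = 0"; cases "i = 1") (auto simp: mem_cells_shape_kk1m intro: exI[of _ "i - 2"])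

lemma all_step_iff: "(\<forall>s. P s) \<longleftrightarrow> P U \<and> P D \<and> P F"
  by (metis step.exhaust)

lemma syt_shape_kk1m_iff:
  "T \<in> syt (shape_kk1m k m) \<longleftrightarrow>
    bij_betw T (cells (shape_kk1m k m)) {1..2 * k + m} \<and>
    (\<forall>c. c \<notin> cells (shape_kk1m k m) \<longrightarrow> T c = 0) \<and>
    (\<forall>s j. Suc j < shape_count k m s \<longrightarrow> T (cell s j) < T (cell s (Suc j))) \<and>
    (\<forall>j<k. T (cell U j) < T (cell D j)) \<and>
    (0 < m \<longrightarrow> T (cell D 0) < T (cell F 0))"
proof -
  let ?chain = "\<lambda>s. \<forall>j. Suc j < shape_count k m s \<longrightarrow> T (cell s j) < T (cell s (Suc j))"
  have rows: "(\<forall>i j. (i, j + 1) \<in> cells (shape_kk1m k m) \<longrightarrow> T (i, j) < T (i, j + 1)) \<longleftrightarrow>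
      ?chain U \<and> ?chain D"
    by (simp add: mem_cells_shape_kk1m_right shape_count_def) blast
  have cols: "(\<forall>i j. (i + 1, j) \<in> cells (shape_kk1m k m) \<longrightarrow> T (i, j) < T (i + 1, j)) \<longleftrightarrow>
      (\<forall>j<k. T (cell U j) < T (cell D j)) \<and> (0 < m \<longrightarrow> T (cell D 0) < T (cell F 0)) \<and> ?chain F"
    by (simp add: mem_cells_shape_kk1m_below shape_count_def add_2_eq_Suc') blast
  have chains: "(\<forall>s. ?chain s) \<longleftrightarrow> ?chain U \<and> ?chain D \<and> ?chain F"
    by (rule all_step_iff)
  have size: "sum_list (shape_kk1m k m) = 2 * k + m"
    by (simp add: shape_kk1m_def sum_list_replicate)
  show ?thesis
    unfolding syt_def mem_Collect_eq rows cols chains size by blast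
qed

definition path_tableau :: "nat \<Rightarrow> nat \<Rightarrow> step list \<Rightarrow> nat \<times> nat \<Rightarrow> nat" where
  "path_tableau k m v c =
    (if c \<in> cells (shape_kk1m k m) then Suc (positions v (cell_step c) ! cell_index c) else 0)"

definition tableau_path :: "nat \<Rightarrow> nat \<Rightarrow> (nat \<times> nat \<Rightarrow> nat) \<Rightarrow> step list" where
  "tableau_path k m T =
    map (\<lambda>p. cell_step (inv_into (cells (shape_kk1m k m)) T (Suc p))) [0..<2 * k + m]"

lemma length_tableau_path [simp]: "length (tableau_path k m T) = 2 * k + m"
  by (simp add: tableau_path_def)

lemma cells_shape_kk1m_cases:
  assumes "c \<in> cells (shape_kk1m k m)"
  obtains s j where "c = cell s j" and "j < shape_count k m s"
  using assms cell_cell_step_index cell_index_less by metis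

lemma path_tableau_cell:
  "j < shape_count k m s \<Longrightarrow> path_tableau k m v (cell s j) = Suc (positions v s ! j)"
  by (simp add: path_tableau_def cell_mem_cells_iff)

lemma length_eq_shape_count:
  "(\<And>s. count_list v s = shape_count k m s) \<Longrightarrow> length v = 2 * k + m"
  by (simp add: length_eq_count_list_steps shape_count_def)

lemma bij_betw_path_tableau:
  assumes counts: "\<And>s. count_list v s = shape_count k m s"
  shows "bij_betw (path_tableau k m v) (cells (shape_kk1m k m)) {1..2 * k + m}"
proof (rule bij_betw_imageI)
  let ?C = "cells (shape_kk1m k m)"
  have len: "length v = 2 * k + m" using counts by (rule length_eq_shape_count)
  show "inj_on (path_tableau k m v) ?C"
  proof (rule inj_onI)
    fix c1 c2 assume c1: "c1 \<in> ?C" and c2: "c2 \<in> ?C"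
      and eq: "path_tableau k m v c1 = path_tableau k m v c2"
    obtain s1 j1 where c1_eq: "c1 = cell s1 j1" and j1: "j1 < count_list v s1"
      using c1 counts by (auto elim: cells_shape_kk1m_cases)
    obtain s2 j2 where c2_eq: "c2 = cell s2 j2" and j2: "j2 < count_list v s2"
      using c2 counts by (auto elim: cells_shape_kk1m_cases)
    note c = c1_eq c2_eq and j = j1 j2
    have pos: "positions v s1 ! j1 = positions v s2 ! j2"
      using eq j by (simp add: c counts path_tableau_cell)
    then have "s1 = s2" using positions_nth(2)[OF j(1)] positions_nth(2)[OF j(2)] by simp
    with pos j have "j1 = j2" using positions_nth_inject[of j1 v s1 j2] by simp
    with \<open>s1 = s2\<close> show "c1 = c2" by (simp add: c)
  qed
  show "path_tableau k m v ` ?C = {1..2 * k + m}"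
  proof
    show "path_tableau k m v ` ?C \<subseteq> {1..2 * k + m}"
    proof
      fix t assume "t \<in> path_tableau k m v ` ?C"
      then obtain s j where j: "j < count_list v s" "t = path_tableau k m v (cell s j)"
        using counts by (auto elim: cells_shape_kk1m_cases)
      then show "t \<in> {1..2 * k + m}"
        using positions_nth(1)[OF j(1)] len by (simp add: path_tableau_cell counts)
    qed
  next
    show "{1..2 * k + m} \<subseteq> path_tableau k m v ` ?C"
    proof
      fix t assume t: "t \<in> {1..2 * k + m}"
      define p where "p = t - 1"
      have p: "p < length v" "t = Suc p" using t len by (auto simp: p_def)
      then have "p \<in> set (positions v (v ! p))" by (simp add: set_positions)
      then obtain j where j: "j < shape_count k m (v ! p)" "positions v (v ! p) ! j = p"
        by (auto simp: in_set_conv_nth length_positions counts)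
      then have "t = path_tableau k m v (cell (v ! p) j)" by (simp add: path_tableau_cell p(2))
      moreover have "cell (v ! p) j \<in> ?C" using j by (simp add: cell_mem_cells_iff)
      ultimately show "t \<in> path_tableau k m v ` ?C" by blast
    qed
  qed
qed

context
  fixes k m :: nat and T :: "nat \<times> nat \<Rightarrow> nat"
  assumes bij: "bij_betw T (cells (shape_kk1m k m)) {1..2 * k + m}"
begin

lemma tableau_pos: "c \<in> cells (shape_kk1m k m) \<Longrightarrow> 0 < T c"
  using bij_betwE[OF bij] by fastforce

lemma tableau_path_nth_pred:
  assumes "c \<in> cells (shape_kk1m k m)"
  shows "T c - 1 < 2 * k + m" and "tableau_path k m T ! (T c - 1) = cell_step c"
proof -
  have "T c \<in> {1..2 * k + m}" using bij_betwE[OF bij] assms by blast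
  then have idx: "T c - 1 < 2 * k + m" "Suc (T c - 1) = T c" by auto
  then show "T c - 1 < 2 * k + m" by simp
  have "inv_into (cells (shape_kk1m k m)) T (T c) = c"
    using assms bij by (simp add: bij_betw_def)
  then show "tableau_path k m T ! (T c - 1) = cell_step c"
    using idx by (simp add: tableau_path_def)
qed

lemma tableau_path_index_cases:
  assumes "p < 2 * k + m"
  obtains c where "c \<in> cells (shape_kk1m k m)" and "p = T c - 1"
proof -
  have "Suc p \<in> T ` cells (shape_kk1m k m)" using assms bij by (simp add: bij_betw_def)
  then obtain c where "c \<in> cells (shape_kk1m k m)" "Suc p = T c" by blast
  then show ?thesis using that by simp
qed

lemma positions_tableau_path:
  assumes chain: "\<And>j. Suc j < shape_count k m s \<Longrightarrow> T (cell s j) < T (cell s (Suc j))"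
  shows "positions (tableau_path k m T) s = map (\<lambda>j. T (cell s j) - 1) [0..<shape_count k m s]"
proof (rule positions_eqI)
  have pos: "0 < T (cell s j)" if "j < shape_count k m s" for j
    using that by (simp add: tableau_pos cell_mem_cells_iff)
  show "sorted_wrt (<) (map (\<lambda>j. T (cell s j) - 1) [0..<shape_count k m s])"
    unfolding sorted_wrt_iff_nth_Suc_transp[OF transp_on_less]
  proof (intro allI impI)
    fix i assume "Suc i < length (map (\<lambda>j. T (cell s j) - 1) [0..<shape_count k m s])"
    then have i: "Suc i < shape_count k m s" by simp
    have "0 < T (cell s i)" "T (cell s i) < T (cell s (Suc i))" using pos chain i by simp_all
    then show "map (\<lambda>j. T (cell s j) - 1) [0..<shape_count k m s] ! i <
        map (\<lambda>j. T (cell s j) - 1) [0..<shape_count k m s] ! Suc i"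
      using i by (simp del: upt_Suc)
  qed
  show "set (map (\<lambda>j. T (cell s j) - 1) [0..<shape_count k m s]) =
      {p. p < length (tableau_path k m T) \<and> tableau_path k m T ! p = s}"
  proof (intro set_eqI iffI)
    fix p assume "p \<in> set (map (\<lambda>j. T (cell s j) - 1) [0..<shape_count k m s])"
    then obtain j where "j < shape_count k m s" "p = T (cell s j) - 1" by auto
    then show "p \<in> {p. p < length (tableau_path k m T) \<and> tableau_path k m T ! p = s}"
      using tableau_path_nth_pred[of "cell s j"] by (simp add: cell_mem_cells_iff tableau_path_def)
  next
    fix p assume "p \<in> {p. p < length (tableau_path k m T) \<and> tableau_path k m T ! p = s}"
    then have p: "p < 2 * k + m" "tableau_path k m T ! p = s" by (simp_all add: tableau_path_def)
    obtain c where c: "c \<in> cells (shape_kk1m k m)" "p = T c - 1"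
      using p(1) by (rule tableau_path_index_cases)
    have "cell_step c = s" using p tableau_path_nth_pred(2)[OF c(1)] c(2) by simp
    then have "T c - 1 = T (cell s (cell_index c)) - 1" "cell_index c < shape_count k m s"
      using cell_cell_step_index[OF c(1)] cell_index_less[OF c(1)] by simp_all
    then show "p \<in> set (map (\<lambda>j. T (cell s j) - 1) [0..<shape_count k m s])"
      unfolding c(2) by simp
  qed
qed

end

lemma path_tableau_tableau_path:
  assumes "T \<in> syt (shape_kk1m k m)"
  shows "path_tableau k m (tableau_path k m T) = T"
proof
  fix c
  have bij: "bij_betw T (cells (shape_kk1m k m)) {1..2 * k + m}"
    and zero: "c \<notin> cells (shape_kk1m k m) \<Longrightarrow> T c = 0"
    and chain: "\<And>s j. Suc j < shape_count k m s \<Longrightarrow> T (cell s j) < T (cell s (Suc j))"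
    using assms unfolding syt_shape_kk1m_iff by blast+
  show "path_tableau k m (tableau_path k m T) c = T c"
  proof (cases "c \<in> cells (shape_kk1m k m)")
    case True
    then obtain s j where c: "c = cell s j" and j: "j < shape_count k m s"
      by (rule cells_shape_kk1m_cases)
    have "0 < T c" using True by (rule tableau_pos[OF bij])
    then show ?thesis
      using j by (simp add: c path_tableau_cell positions_tableau_path[OF bij chain])
  qed (simp add: path_tableau_def zero)
qed

lemma tableau_path_path_tableau:
  assumes counts: "\<And>s. count_list v s = shape_count k m s"
  shows "tableau_path k m (path_tableau k m v) = v"
proof (rule nth_equalityI)
  have len: "length v = 2 * k + m" using counts by (rule length_eq_shape_count)
  then show "length (tableau_path k m (path_tableau k m v)) = length v" by simp
  fix p assume "p < length (tableau_path k m (path_tableau k m v))"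
  then have "p < length v" using len by simp
  then have "p \<in> set (positions v (v ! p))" by (simp add: set_positions)
  then obtain j where j: "j < shape_count k m (v ! p)" "positions v (v ! p) ! j = p"
    by (auto simp: in_set_conv_nth length_positions counts)
  then have "path_tableau k m v (cell (v ! p) j) - 1 = p" by (simp add: path_tableau_cell)
  then show "tableau_path k m (path_tableau k m v) ! p = v ! p"
    using tableau_path_nth_pred(2)[OF bij_betw_path_tableau[OF counts], of "cell (v ! p) j"] j
    by (simp add: cell_mem_cells_iff)
qed

lemma flat_after_down_paths_counts:
  assumes "v \<in> flat_after_down_paths n m k"
  shows "count_list v s = shape_count k m s"
  using assms motzkin_path_iff_positions[of v]
  by (cases s) (auto simp: flat_after_down_paths_def shape_count_def)

text \<open>For \<open>k = 0\<close> the column condition below row 1 only compares with the value 0 outside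
  the shape, so it no longer forces a down step before the first flat step.\<close>

lemma tableau_path_mem_flat_after_down_paths:
  assumes k: "1 \<le> k" and T: "T \<in> syt (shape_kk1m k m)"
  shows "tableau_path k m T \<in> flat_after_down_paths (2 * k + m) m k"
proof -
  let ?w = "tableau_path k m T"
  have bij: "bij_betw T (cells (shape_kk1m k m)) {1..2 * k + m}"
    and chain: "\<And>s j. Suc j < shape_count k m s \<Longrightarrow> T (cell s j) < T (cell s (Suc j))"
    and ballot: "\<And>j. j < k \<Longrightarrow> T (cell U j) < T (cell D j)"
    and first: "0 < m \<Longrightarrow> T (cell D 0) < T (cell F 0)"
    using T unfolding syt_shape_kk1m_iff by blast+
  have pos: "positions ?w s ! j = T (cell s j) - 1" if "j < shape_count k m s" for s j
    using that by (simp add: positions_tableau_path[OF bij chain])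
  have counts: "count_list ?w s = shape_count k m s" for s
    by (simp flip: length_positions add: positions_tableau_path[OF bij chain])
  have T_pos: "0 < T (cell s j)" if "j < shape_count k m s" for s j
    using that by (simp add: tableau_pos[OF bij] cell_mem_cells_iff)
  have "positions ?w U ! j < positions ?w D ! j" if "j < k" for j
    using ballot[OF that] T_pos[of j U] that pos[of j U] pos[of j D] by (simp add: shape_count_def)
  then have "motzkin_path ?w"
    unfolding motzkin_path_iff_positions by (simp add: counts shape_count_def)
  moreover have "positions ?w D ! 0 < positions ?w F ! 0" if "0 < m"
    using first[OF that] T_pos[of 0 D] that k pos[of 0 D] pos[of 0 F] by (simp add: shape_count_def)
  then have "flat_after_down ?w"
    unfolding flat_after_down_iff_positions using k by (simp add: counts shape_count_def)
  ultimately show ?thesis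
    by (simp add: flat_after_down_paths_def counts shape_count_def)
qed

lemma path_tableau_mem_syt:
  assumes v: "v \<in> flat_after_down_paths n m k"
  shows "path_tableau k m v \<in> syt (shape_kk1m k m)"
proof -
  note counts = flat_after_down_paths_counts[OF v]
  have ballot: "\<forall>j<k. positions v U ! j < positions v D ! j"
    and first: "0 < m \<longrightarrow> 0 < k \<and> positions v D ! 0 < positions v F ! 0"
    using v counts[of D] counts[of F]
    by (auto simp: flat_after_down_paths_def motzkin_path_iff_positions flat_after_down_iff_positions
        shape_count_def)
  show ?thesis
    unfolding syt_shape_kk1m_iff
  proof (intro conjI allI impI)
    show "bij_betw (path_tableau k m v) (cells (shape_kk1m k m)) {1..2 * k + m}"
      using counts by (rule bij_betw_path_tableau)
    show "path_tableau k m v c = 0" if "c \<notin> cells (shape_kk1m k m)" for c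
      using that by (simp add: path_tableau_def)
    show "path_tableau k m v (cell s j) < path_tableau k m v (cell s (Suc j))"
      if "Suc j < shape_count k m s" for s j
      using that positions_nth_strict_mono[of j "Suc j" v s] by (simp add: path_tableau_cell counts)
    show "path_tableau k m v (cell U j) < path_tableau k m v (cell D j)" if "j < k" for j
      using that ballot path_tableau_cell[of j k m U v] path_tableau_cell[of j k m D v]
      by (simp add: shape_count_def)
    show "path_tableau k m v (cell D 0) < path_tableau k m v (cell F 0)" if "0 < m"
      using that first path_tableau_cell[of 0 k m D v] path_tableau_cell[of 0 k m F v]
      by (simp add: shape_count_def)
  qed
qed

lemma bij_betw_tableau_path:
  assumes "1 \<le> k"
  shows "bij_betw (tableau_path k m) (syt (shape_kk1m k m)) (flat_after_down_paths (2 * k + m) m k)"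
proof (rule bij_betw_byWitness[where f' = "path_tableau k m"])
  show "\<forall>T\<in>syt (shape_kk1m k m). path_tableau k m (tableau_path k m T) = T"
    using path_tableau_tableau_path by blast
  show "\<forall>v\<in>flat_after_down_paths (2 * k + m) m k. tableau_path k m (path_tableau k m v) = v"
    using tableau_path_path_tableau flat_after_down_paths_counts by blast
  show "tableau_path k m ` syt (shape_kk1m k m) \<subseteq> flat_after_down_paths (2 * k + m) m k"
    using tableau_path_mem_flat_after_down_paths[OF assms] by blast
  show "path_tableau k m ` flat_after_down_paths (2 * k + m) m k \<subseteq> syt (shape_kk1m k m)"
    using path_tableau_mem_syt by blast
qed

theorem proposition1p2:
  fixes k m n :: nat
  assumes "k \<ge> 1" and "n = 2 * k + m"
  shows "card (riordan_paths n m k) = num_syt ([k, k] @ replicate m 1)"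
proof -
  have "card (riordan_paths n m k) = card (flat_after_down_paths n m k)"
    using bij_betw_same_card[OF bij_betw_riordan_transform[OF assms(1)]] by simp
  also have "\<dots> = card (syt (shape_kk1m k m))"
    using bij_betw_same_card[OF bij_betw_tableau_path[OF assms(1)]] assms(2) by simp
  finally show ?thesis by (simp add: num_syt_def shape_kk1m_def)
qed

end
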